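(* For every positive integer $n$, $\mathrm{ex}(n,K_3,T_1)=\mathrm{ex}(n,K_3,P_4)=\mathcal{N}(K_3,D(3,n))=\lfloor n/3\rfloor$.
   Context: $T_1$ (the paw) is a triangle together with one further vertex joined to exactly one vertex of the triangle; $P_4$ is the path on $4$ vertices. $D(3,n)$ is the graph on $n$ vertices consisting of $\lfloor n/3\rfloor$ vertex-disjoint triangles and a clique on the remaining vertices. For graphs $H,G$, $\mathcal{N}(H,G)$ is the number of subgraphs of $G$ isomorphic to $H$, and $\mathrm{ex}(n,H,F)$ is the maximum of $\mathcal{N}(H,G)$ over $F$-free graphs $G$ on $n$ vertices. *)

theory Defs
  imports Main
begin

type_synonym 'a graph = "'a set \<times> 'a set set"

definition simple_graph :: "'a graph \<Rightarrow> bool" where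
  "simple_graph G \<longleftrightarrow> finite (fst G) \<and> (\<forall>e \<in> snd G. e \<subseteq> fst G \<and> card e = 2)"

definition graph_iso :: "'a graph \<Rightarrow> 'b graph \<Rightarrow> bool" where
  "graph_iso G H \<longleftrightarrow> (\<exists>f. bij_betw f (fst G) (fst H) \<and> (\<lambda>e. f ` e) ` snd G = snd H)"

definition subgraphs :: "'a graph \<Rightarrow> 'a graph set" where
  "subgraphs G = {(V', E'). V' \<subseteq> fst G \<and> E' \<subseteq> snd G \<and> (\<forall>e \<in> E'. e \<subseteq> V')}"

definition count_copies :: "'b graph \<Rightarrow> 'a graph \<Rightarrow> nat" where
  "count_copies H G = card {S \<in> subgraphs G. graph_iso S H}"

text \<open>ex(n,H,F): maximum of N(H,G) over F-free graphs G on n vertices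
  (vertex set taken to be {0..<n}, without loss of generality).\<close>
definition gen_ex :: "nat \<Rightarrow> 'b graph \<Rightarrow> 'c graph \<Rightarrow> nat" where
  "gen_ex n H F = Max {count_copies H G | G :: nat graph.
      simple_graph G \<and> fst G = {0..<n} \<and> count_copies F G = 0}"

definition K3 :: "nat graph" where
  "K3 = ({0,1,2}, {{0,1},{1,2},{0,2}})"

definition P4 :: "nat graph" where
  "P4 = ({0,1,2,3}, {{0,1},{1,2},{2,3}})"

definition T1 :: "nat graph" where
  "T1 = ({0,1,2,3}, {{0,1},{1,2},{0,2},{2,3}})"

text \<open>D(3,n): vertices 0..n-1; blocks {3i,3i+1,3i+2} for i < n div 3 are triangles and
  the remaining (at most 2) vertices form a clique; i.e. u,v adjacent iff u div 3 = v div 3.\<close>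
definition D3 :: "nat \<Rightarrow> nat graph" where
  "D3 n = ({0..<n}, {{u, v} | u v. u \<noteq> v \<and> u < n \<and> v < n \<and> u div 3 = v div 3})"

end

(* If a graph contains no paw, or no P4, then two distinct triangles T, T' are vertex-disjoint:
   if they met in x, a vertex d of T' outside T would give an edge xd hanging off the triangle T,
   and T plus xd is a paw containing a P4.  Disjoint triangles on n vertices number at most
   floor(n/3).  Copies of K3 are exactly the complete graphs on the vertex sets of triangles, so
   counting them amounts to counting those vertex sets.  D(3,n) attains the bound and has neither
   subgraph, since its components have at most three vertices and so contain no path on four. *)

theory Submission
  imports Defs
begin

lemma finite_subgraphs:
  assumes "simple_graph G"
  shows "finite (subgraphs G)"
proof -
  have "finite (fst G)" "snd G \<subseteq> Pow (fst G)"
    using assms by (auto simp: simple_graph_def)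
  moreover have "subgraphs G \<subseteq> Pow (fst G) \<times> Pow (snd G)"
    by (auto simp: subgraphs_def)
  ultimately show ?thesis
    by (meson finite_Pow_iff finite_SigmaI finite_subset)
qed

lemma graph_iso_sym:
  assumes "graph_iso G H" "\<forall>e\<in>snd G. e \<subseteq> fst G"
  shows "graph_iso H G"
proof -
  obtain f where f: "bij_betw f (fst G) (fst H)" "(\<lambda>e. f ` e) ` snd G = snd H"
    using assms(1) by (auto simp: graph_iso_def)
  let ?g = "inv_into (fst G) f"
  have "(\<lambda>e. ?g ` e) ` snd H = (\<lambda>e. ?g ` f ` e) ` snd G"
    unfolding f(2)[symmetric] by (simp only: image_image)
  also have "\<dots> = snd G"
    using assms(2) f(1) by (simp add: bij_betw_def inv_into_image_cancel cong: image_cong)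
  finally show ?thesis
    using bij_betw_inv_into[OF f(1)] by (auto simp: graph_iso_def)
qed

lemma count_copies_posE:
  assumes "0 < count_copies H G"
  obtains g where "inj_on g (fst H)" "g ` fst H \<subseteq> fst G" "\<forall>e\<in>snd H. g ` e \<in> snd G"
proof -
  obtain S where S: "S \<in> subgraphs G" "graph_iso S H"
    using assms unfolding count_copies_def card_gt_0_iff by blast
  have "graph_iso H S"
    using S(2) by (rule graph_iso_sym) (use S(1) in \<open>fastforce simp: subgraphs_def\<close>)
  then obtain g where g: "bij_betw g (fst H) (fst S)" "(\<lambda>e. g ` e) ` snd H = snd S"
    by (auto simp: graph_iso_def)
  have "fst S \<subseteq> fst G" "snd S \<subseteq> snd G"
    using S(1) by (auto simp: subgraphs_def)
  with g show ?thesis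
    by (intro that[of g]) (auto simp: bij_betw_def)
qed

lemma count_copies_posI:
  assumes "simple_graph G" "\<forall>e\<in>snd H. e \<subseteq> fst H"
    and "inj_on g (fst H)" "g ` fst H \<subseteq> fst G" "\<forall>e\<in>snd H. g ` e \<in> snd G"
  shows "0 < count_copies H G"
proof -
  define S where "S = (g ` fst H, (\<lambda>e. g ` e) ` snd H)"
  have "S \<in> subgraphs G"
    using assms(2,4,5) by (auto simp: S_def subgraphs_def)
  moreover have "graph_iso H S"
    using assms(3) unfolding graph_iso_def S_def bij_betw_def by auto
  then have "graph_iso S H"
    by (rule graph_iso_sym) (use assms(2) in \<open>force simp: S_def\<close>)
  ultimately have "S \<in> {S \<in> subgraphs G. graph_iso S H}"
    by simp
  moreover have "finite {S \<in> subgraphs G. graph_iso S H}"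
    using finite_subgraphs[OF assms(1)] by simp
  ultimately show ?thesis
    unfolding count_copies_def card_gt_0_iff by blast
qed

definition complete_graph :: "'a set \<Rightarrow> 'a graph" where
  "complete_graph V = (V, {e. e \<subseteq> V \<and> card e = 2})"

lemma bij_betw_image_card_subsets:
  assumes "bij_betw f A B"
  shows "(\<lambda>e. f ` e) ` {e. e \<subseteq> A \<and> card e = k} = {e. e \<subseteq> B \<and> card e = k}"
proof (intro equalityI subsetI)
  fix e assume "e \<in> (\<lambda>e. f ` e) ` {e. e \<subseteq> A \<and> card e = k}"
  then show "e \<in> {e. e \<subseteq> B \<and> card e = k}"
    using assms by (auto simp: bij_betw_def card_image inj_on_subset)
next
  fix e assume e: "e \<in> {e. e \<subseteq> B \<and> card e = k}"
  let ?g = "inv_into A f"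
  have "bij_betw ?g B A"
    using assms by (rule bij_betw_inv_into)
  then have "?g ` e \<subseteq> A" "card (?g ` e) = k"
    using e by (auto simp: bij_betw_def card_image inj_on_subset)
  moreover have "f ` ?g ` e = e"
    using e assms by (simp add: bij_betw_def image_inv_into_cancel)
  ultimately show "e \<in> (\<lambda>e. f ` e) ` {e. e \<subseteq> A \<and> card e = k}"
    by (metis (mono_tags, lifting) image_eqI mem_Collect_eq)
qed

lemma graph_iso_complete_graph:
  "bij_betw f A B \<Longrightarrow> graph_iso (complete_graph A) (complete_graph B)"
  unfolding graph_iso_def complete_graph_def by (auto intro!: exI[of _ f] bij_betw_image_card_subsets)

lemma K3_eq_complete_graph: "K3 = complete_graph {0,1,2}"
proof -
  have "e \<in> {{0,1},{1,2},{0,2}}" if "e \<subseteq> {0::nat,1,2}" "card e = 2" for e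
  proof -
    obtain x y where "e = {x,y}" "x \<noteq> y"
      using \<open>card e = 2\<close> by (auto simp: card_2_iff)
    moreover have "x \<in> {0,1,2}" "y \<in> {0,1,2}"
      using that(1) \<open>e = {x,y}\<close> by auto
    ultimately show ?thesis
      by (auto simp: doubleton_eq_iff)
  qed
  moreover have "{{0,1},{1,2},{0,2}} \<subseteq> {e. e \<subseteq> {0::nat,1,2} \<and> card e = 2}"
    by simp
  ultimately have "{e. e \<subseteq> {0,1,2} \<and> card e = 2} = {{0,1},{1,2},{0::nat,2}}"
    by blast
  then show ?thesis
    by (simp add: K3_def complete_graph_def)
qed

definition triangles :: "'a graph \<Rightarrow> 'a set set" where
  "triangles G = {T. card T = 3 \<and> complete_graph T \<in> subgraphs G}"

lemma K3_copies_eq_triangles: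
  "{S \<in> subgraphs G. graph_iso S K3} = complete_graph ` triangles G"
proof (intro equalityI subsetI)
  fix S assume "S \<in> {S \<in> subgraphs G. graph_iso S K3}"
  then have S: "S \<in> subgraphs G" "graph_iso S K3"
    by auto
  have "graph_iso K3 S"
    using S(2) by (rule graph_iso_sym) (use S(1) in \<open>fastforce simp: subgraphs_def\<close>)
  then obtain f where f: "bij_betw f {0::nat,1,2} (fst S)"
      "(\<lambda>e. f ` e) ` {e. e \<subseteq> {0,1,2} \<and> card e = 2} = snd S"
    by (auto simp: graph_iso_def K3_eq_complete_graph complete_graph_def)
  have "S = complete_graph (fst S)"
    using f bij_betw_image_card_subsets[OF f(1)] by (simp add: complete_graph_def prod_eq_iff)
  moreover have "card (fst S) = 3"
    using bij_betw_same_card[OF f(1)] by simp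
  ultimately show "S \<in> complete_graph ` triangles G"
    using S(1) unfolding triangles_def by (metis (mono_tags, lifting) image_eqI mem_Collect_eq)
next
  fix S assume "S \<in> complete_graph ` triangles G"
  then obtain T where T: "S = complete_graph T" "card T = 3" "complete_graph T \<in> subgraphs G"
    by (auto simp: triangles_def)
  obtain f where "bij_betw f T {0::nat,1,2}"
    using finite_same_card_bij[of T "{0::nat,1,2}"] T(2) card.infinite by fastforce
  then have "graph_iso S K3"
    unfolding T(1) K3_eq_complete_graph by (rule graph_iso_complete_graph)
  with T show "S \<in> {S \<in> subgraphs G. graph_iso S K3}"
    by simp
qed

lemma count_copies_K3: "count_copies K3 G = card (triangles G)"
proof -
  have "inj_on complete_graph (triangles G)"
    by (rule inj_onI) (simp add: complete_graph_def)
  then show ?thesis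
    unfolding count_copies_def K3_copies_eq_triangles by (rule card_image)
qed

lemma triangles_subset: "T \<in> triangles G \<Longrightarrow> T \<subseteq> fst G"
  by (simp add: triangles_def complete_graph_def subgraphs_def)

lemma triangles_edge:
  assumes "T \<in> triangles G" "x \<in> T" "y \<in> T" "x \<noteq> y"
  shows "{x,y} \<in> snd G"
  using assms by (auto simp: triangles_def complete_graph_def subgraphs_def)

lemma finite_triangles: "simple_graph G \<Longrightarrow> finite (triangles G)"
  by (rule finite_subset[of _ "Pow (fst G)"]) (auto simp: simple_graph_def dest: triangles_subset)

lemma pendant_triangle_count_copies_pos:
  assumes "simple_graph G" "T \<in> triangles G" "x \<in> T" "d \<notin> T" "{x,d} \<in> snd G"
  shows "0 < count_copies T1 G" "0 < count_copies P4 G"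
proof -
  have "card (T - {x}) = 2"
    using assms(2,3) by (simp add: triangles_def)
  then obtain b c where bc: "T - {x} = {b,c}" "b \<noteq> c"
    by (auto simp: card_2_iff)
  then have T: "T = {x,b,c}" "x \<noteq> b" "x \<noteq> c"
    using assms(3) by auto
  define g where "g = (\<lambda>i::nat. if i = 0 then b else if i = 1 then c else if i = 2 then x else d)"
  have inj: "inj_on g (fst T1)"
    using T bc(2) assms(4) by (auto simp: inj_on_def g_def T1_def)
  have vertices: "g ` fst T1 \<subseteq> fst G"
    using T assms(4) triangles_subset[OF assms(2)] assms(1,5)
    by (auto simp: g_def simple_graph_def T1_def)
  have edges: "\<forall>e\<in>snd T1. g ` e \<in> snd G"
    using T bc(2) assms(2,5) by (auto simp: T1_def g_def insert_commute intro: triangles_edge)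
  show "0 < count_copies T1 G"
    using inj vertices edges by (intro count_copies_posI[OF assms(1)]) (auto simp: T1_def)
  show "0 < count_copies P4 G"
    using inj vertices edges by (intro count_copies_posI[OF assms(1)]) (auto simp: T1_def P4_def)
qed

lemma triangles_disjoint:
  assumes "simple_graph G" "count_copies T1 G = 0 \<or> count_copies P4 G = 0"
    and "T \<in> triangles G" "T' \<in> triangles G" "T \<noteq> T'"
  shows "T \<inter> T' = {}"
proof (rule ccontr)
  assume "T \<inter> T' \<noteq> {}"
  then obtain x where x: "x \<in> T" "x \<in> T'"
    by blast
  have "\<not> T' \<subseteq> T"
    using assms(3-5) card_subset_eq[of T T'] by (fastforce simp: triangles_def intro: card_ge_0_finite)
  then obtain d where d: "d \<in> T'" "d \<notin> T"
    by blast
  have "{x,d} \<in> snd G"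
    using triangles_edge[OF assms(4) x(2) d(1)] x(1) d(2) by blast
  then show False
    using pendant_triangle_count_copies_pos[OF assms(1,3) x(1) d(2)] assms(2) by simp
qed

lemma card_triangles_le:
  assumes "simple_graph G" "count_copies T1 G = 0 \<or> count_copies P4 G = 0"
  shows "card (triangles G) \<le> card (fst G) div 3"
proof -
  have fin: "finite (fst G)"
    using assms(1) by (simp add: simple_graph_def)
  have "\<Union> (triangles G) \<subseteq> fst G"
    using triangles_subset by blast
  then have "3 * card (triangles G) = card (\<Union> (triangles G))"
    using finite_triangles[OF assms(1)] triangles_disjoint[OF assms] fin
    by (intro card_partition) (auto simp: triangles_def intro: finite_subset)
  also have "\<dots> \<le> card (fst G)"
    using \<open>\<Union> (triangles G) \<subseteq> fst G\<close> fin by (rule card_mono[rotated])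
  finally show ?thesis
    by linarith
qed

lemma simple_graph_D3: "simple_graph (D3 n)"
  unfolding simple_graph_def D3_def by auto

lemma fst_D3: "fst (D3 n) = {0..<n}"
  by (simp add: D3_def)

lemma D3_edge_iff: "{u,v} \<in> snd (D3 n) \<longleftrightarrow> u \<noteq> v \<and> u < n \<and> v < n \<and> u div 3 = v div 3"
  unfolding D3_def by (auto simp: doubleton_eq_iff)

lemma D3_path_free:
  assumes "{w,x} \<in> snd (D3 n)" "{x,y} \<in> snd (D3 n)" "{y,z} \<in> snd (D3 n)"
  shows "\<not> distinct [w,x,y,z]"
proof
  assume "distinct [w,x,y,z]"
  have block: "v \<in> {3 * q..<3 * q + 3}" if "v div 3 = q" for v q :: nat
    using that div_mult_mod_eq[of v 3] mod_less_divisor[of 3 v] by simp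
  have "{w,x,y,z} \<subseteq> {3 * (w div 3)..<3 * (w div 3) + 3}"
    using assms block unfolding D3_edge_iff by (metis empty_subsetI insert_subset)
  then have "card {w,x,y,z} \<le> 3"
    by (metis card_atLeastLessThan card_mono finite_atLeastLessThan add_diff_cancel_left')
  with \<open>distinct [w,x,y,z]\<close> show False
    by simp
qed

lemma count_copies_D3_eq_0:
  fixes H :: "nat graph"
  assumes "fst H = {0,1,2,3}" "{{0,1},{1,2},{2,3}} \<subseteq> snd H"
  shows "count_copies H (D3 n) = 0"
proof (rule ccontr)
  assume "count_copies H (D3 n) \<noteq> 0"
  then obtain g where g: "inj_on g (fst H)" "g ` fst H \<subseteq> fst (D3 n)" "\<forall>e\<in>snd H. g ` e \<in> snd (D3 n)"
    by (auto elim: count_copies_posE)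
  have "g ` {0,1} \<in> snd (D3 n)" "g ` {1,2} \<in> snd (D3 n)" "g ` {2,3} \<in> snd (D3 n)"
    using g(3) assms(2) by blast+
  then have "{g 0, g 1} \<in> snd (D3 n)" "{g 1, g 2} \<in> snd (D3 n)" "{g 2, g 3} \<in> snd (D3 n)"
    by simp_all
  moreover have "distinct [g 0, g 1, g 2, g 3]"
    using g(1) assms(1) by (auto dest: inj_onD)
  ultimately show False
    using D3_path_free by blast
qed

lemma count_copies_T1_P4_D3: "count_copies T1 (D3 n) = 0" "count_copies P4 (D3 n) = 0"
  by (simp_all add: count_copies_D3_eq_0 T1_def P4_def)

lemma block_in_triangles_D3:
  assumes "i < n div 3"
  shows "{3*i, 3*i+1, 3*i+2} \<in> triangles (D3 n)"
proof -
  let ?T = "{3*i, 3*i+1, 3*i+2}"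
  have "3*i+2 < n"
    using assms by linarith
  have same_block: "v div 3 = i" if "v \<in> ?T" for v
    using that by auto
  have "?T \<subseteq> fst (D3 n)"
    using \<open>3*i+2 < n\<close> by (auto simp: fst_D3)
  moreover have "e \<in> snd (D3 n)" if "e \<subseteq> ?T" "card e = 2" for e
  proof -
    obtain u v where uv: "e = {u,v}" "u \<noteq> v"
      using \<open>card e = 2\<close> by (auto simp: card_2_iff)
    then have "u \<in> ?T" "v \<in> ?T"
      using that(1) by auto
    then have "u div 3 = v div 3" "u < n" "v < n"
      using same_block \<open>?T \<subseteq> fst (D3 n)\<close> by (auto simp: fst_D3)
    with uv show ?thesis
      by (simp add: D3_edge_iff)
  qed
  ultimately show ?thesis
    unfolding triangles_def complete_graph_def subgraphs_def by auto
qed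

lemma card_triangles_D3: "card (triangles (D3 n)) = n div 3"
proof (rule antisym)
  show "card (triangles (D3 n)) \<le> n div 3"
    using card_triangles_le[OF simple_graph_D3] count_copies_T1_P4_D3 by (simp add: fst_D3)
  have "inj_on (\<lambda>i. {3*i, 3*i+1, 3*i+2}) {..<n div 3}"
  proof (rule inj_onI)
    fix i j :: nat
    assume "{3*i, 3*i+1, 3*i+2} = {3*j, 3*j+1, 3*j+2}"
    then have "3*i \<in> {3*j, 3*j+1, 3*j+2}"
      by (metis insertI1)
    then show "i = j"
      by simp presburger
  qed
  moreover have "(\<lambda>i. {3*i, 3*i+1, 3*i+2}) ` {..<n div 3} \<subseteq> triangles (D3 n)"
    using block_in_triangles_D3 by blast
  ultimately have "card {..<n div 3} \<le> card (triangles (D3 n))"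
    using finite_triangles[OF simple_graph_D3] by (rule card_inj_on_le)
  then show "n div 3 \<le> card (triangles (D3 n))"
    by simp
qed

lemma gen_ex_eqI:
  fixes H :: "'b graph" and F :: "'c graph" and G0 :: "nat graph"
  assumes "\<And>G :: nat graph. simple_graph G \<Longrightarrow> fst G = {0..<n} \<Longrightarrow> count_copies F G = 0 \<Longrightarrow>
      count_copies H G \<le> m"
    and "simple_graph G0" "fst G0 = {0..<n}" "count_copies F G0 = 0" "count_copies H G0 = m"
  shows "gen_ex n H F = m"
proof -
  let ?A = "{count_copies H G | G :: nat graph. simple_graph G \<and> fst G = {0..<n} \<and> count_copies F G = 0}"
  have "?A \<subseteq> {..m}"
    using assms(1) by blast
  moreover have "m \<in> ?A"
    using assms(2-5) by blast
  ultimately show ?thesis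
    unfolding gen_ex_def by (meson Max_eqI atMost_iff finite_atMost finite_subset subsetD)
qed

theorem mainTheorem15:
  fixes n :: nat
  assumes "n \<ge> 1"
  shows "gen_ex n K3 T1 = gen_ex n K3 P4 \<and> gen_ex n K3 P4 = count_copies K3 (D3 n)
         \<and> count_copies K3 (D3 n) = n div 3"
proof -
  have count_D3: "count_copies K3 (D3 n) = n div 3"
    by (simp add: count_copies_K3 card_triangles_D3)
  have bound: "count_copies K3 G \<le> n div 3"
    if "simple_graph G" "fst G = {0..<n}" "count_copies T1 G = 0 \<or> count_copies P4 G = 0"
    for G :: "nat graph"
    using card_triangles_le[OF that(1,3)] that(2) by (simp add: count_copies_K3)
  have "gen_ex n K3 T1 = n div 3" "gen_ex n K3 P4 = n div 3"
    using bound simple_graph_D3 fst_D3 count_copies_T1_P4_D3 count_D3 by (auto intro!: gen_ex_eqI)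
  with count_D3 show ?thesis
    by simp
qed

end
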